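(* Let $(\lambda_n)_{n\in\mathbb{N}_0}$ be real numbers with $\limsup_{n\to\infty}|\lambda_n|/n\le\beta$ for some $\beta>0$. Let $\gamma>0$, $f\in C^\infty[x_0,x_0+\gamma]$, and suppose there are constants $C>0$, $\sigma>0$ with $|D^{(2n)}f(t)|\le C(2n)!\sigma^{2n}$ for all $t\in[x_0,x_0+\gamma]$ and all $n\in\mathbb{N}_0$. Then for every $\varepsilon>0$ there exist constants $C_2>0$ and $\delta\in(0,\gamma)$ such that $$|D^{(2n+1)}f(t)|\le C_2(2n+1)!(\sigma+\varepsilon)^{2n+1}$$ for all $t\in[x_0,x_0+\delta]$ and all $n\in\mathbb{N}_0$.
   Context: For a sequence $(\lambda_n)$ and a smooth function $f$, $D^{(n)}f=(\frac{d}{dt}-\lambda_0)\cdots(\frac{d}{dt}-\lambda_{n-1})f$ with $D^{(0)}f=f$ (one-sided derivatives at endpoints). $f$ may be complex-valued. *)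

theory Defs
  imports "HOL-Analysis.Analysis"
begin

fun higher_deriv_on :: "real \<Rightarrow> real \<Rightarrow> nat \<Rightarrow> (real \<Rightarrow> complex) \<Rightarrow> real \<Rightarrow> complex" where
  "higher_deriv_on a b 0 f = f"
| "higher_deriv_on a b (Suc k) f =
     (\<lambda>t. vector_derivative (higher_deriv_on a b k f) (at t within {a..b}))"

definition smooth_on_interval :: "real \<Rightarrow> real \<Rightarrow> (real \<Rightarrow> complex) \<Rightarrow> bool" where
  "smooth_on_interval a b f \<longleftrightarrow>
     (\<forall>k. \<forall>t\<in>{a..b}. (higher_deriv_on a b k f has_vector_derivative
                         higher_deriv_on a b (Suc k) f t) (at t within {a..b}))"

text \<open>D^(n) f = (d/dt - lam 0) ... (d/dt - lam (n-1)) f on [a,b]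
  (constant coefficients, so the factors commute).\<close>
fun Dop :: "(nat \<Rightarrow> real) \<Rightarrow> real \<Rightarrow> real \<Rightarrow> nat \<Rightarrow> (real \<Rightarrow> complex) \<Rightarrow> real \<Rightarrow> complex" where
  "Dop lam a b 0 f = f"
| "Dop lam a b (Suc n) f =
     (\<lambda>t. vector_derivative (Dop lam a b n f) (at t within {a..b})
          - complex_of_real (lam n) * Dop lam a b n f t)"

end

theory Submission
  imports Defs
begin

(* The core is a Landau-Kolmogorov type interpolation inequality on a short interval
   [t, t+l]: if g' = h + a g and h' = k + b h with |a|, |b| <= L, l L <= 1/4, |g| <= M0
   and |k| <= M2, then |h t| <= 4 M0 / l + 2 L M0 + 3 l M2.  It is derived from the
   mean-value inequality in two steps: sup |h| is controlled by |h t| (maximum argument),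
   and then g is compared with its linearisation at t.

   Since (d/dt - lam n) D^(n) f = D^(n+1) f, this applies to g = D^(2n) f,
   h = D^(2n+1) f, k = D^(2n+2) f with a = lam (2n), b = lam (2n+1).  The hypothesis
   limsup |lam n| / n <= beta gives |lam n| <= K (n+1), and the step length
   l ~ min (rho, 1 / (K n), 1 / (sigma n)) turns the factorial bounds of the even orders
   into |D^(2n+1) f t| <= C2 (2n+1)! sigma^(2n+1) for t in [x0, x0 + gamma/2].  This is
   even stronger than the claimed bound with sigma + epsilon. *)

lemma norm_increment_le:
  fixes F :: "real \<Rightarrow> complex"
  assumes deriv: "\<And>x. x \<in> {s..r} \<Longrightarrow> (F has_vector_derivative F' x) (at x within {s..r})"
    and bound: "\<And>x. x \<in> {s..r} \<Longrightarrow> norm (F' x) \<le> B"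
    and "s \<le> r"
  shows "norm (F r - F s) \<le> B * (r - s)"
proof -
  have "norm (F r - F s) \<le> B * norm (r - s)"
  proof (rule differentiable_bound[of "{s..r}" F "\<lambda>x h. h *\<^sub>R F' x"])
    show "(F has_derivative (\<lambda>h. h *\<^sub>R F' x)) (at x within {s..r})" if "x \<in> {s..r}" for x
      using deriv[OF that] by (simp add: has_vector_derivative_def)
    show "onorm (\<lambda>h. h *\<^sub>R F' x) \<le> B" if "x \<in> {s..r}" for x
      by (rule onorm_le) (use bound[OF that] in \<open>auto, metis abs_ge_zero mult.commute mult_left_mono\<close>)
  qed (use \<open>s \<le> r\<close> in auto)
  then show ?thesis using \<open>s \<le> r\<close> by simp
qed

lemma increment_bound_from_derivative_relation:
  fixes h k :: "real \<Rightarrow> complex"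
  assumes dh: "\<And>x. x \<in> {t..t+l} \<Longrightarrow> (h has_vector_derivative (k x + of_real b * h x)) (at x within {t..t+l})"
    and b: "\<bar>b\<bar> \<le> L"
    and bk: "\<And>x. x \<in> {t..t+l} \<Longrightarrow> norm (k x) \<le> M2"
    and bh: "\<And>x. x \<in> {t..t+l} \<Longrightarrow> norm (h x) \<le> H"
    and u: "u \<in> {t..t+l}"
  shows "norm (h u - h t) \<le> (L * H + M2) * (u - t)"
proof (rule norm_increment_le[of t u h "\<lambda>x. k x + of_real b * h x"])
  fix x assume x: "x \<in> {t..u}"
  then have x': "x \<in> {t..t+l}" using u by auto
  show "(h has_vector_derivative (k x + of_real b * h x)) (at x within {t..u})"
    using u by (intro has_vector_derivative_within_subset[OF dh[OF x']]) auto
  have "norm (k x + of_real b * h x) \<le> norm (k x) + \<bar>b\<bar> * norm (h x)"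
    by (metis norm_mult norm_of_real norm_triangle_ineq)
  also have "\<dots> \<le> M2 + L * H"
    using bk[OF x'] bh[OF x'] b by (intro add_mono mult_mono) auto
  finally show "norm (k x + of_real b * h x) \<le> L * H + M2" by simp
qed (use u in auto)

text \<open>Under the same relation, on a short interval (l L <= 1/4) the maximum of |h| is
  controlled by its value at the left endpoint: apply the increment bound at a maximiser.\<close>
lemma sup_bound_from_derivative_relation:
  fixes h k :: "real \<Rightarrow> complex"
  assumes l: "l > 0" and L: "l * L \<le> 1/4" and b: "\<bar>b\<bar> \<le> L"
    and dh: "\<And>x. x \<in> {t..t+l} \<Longrightarrow> (h has_vector_derivative (k x + of_real b * h x)) (at x within {t..t+l})"
    and bk: "\<And>x. x \<in> {t..t+l} \<Longrightarrow> norm (k x) \<le> M2"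
    and u: "u \<in> {t..t+l}"
  shows "norm (h u) \<le> 2 * norm (h t) + 2 * l * M2"
proof -
  let ?W = "{t..t+l}"
  have "continuous_on ?W h"
    unfolding continuous_on_eq_continuous_within
    using dh has_vector_derivative_continuous by blast
  then have "continuous_on ?W (\<lambda>x. norm (h x))"
    by (intro continuous_intros)
  then obtain v where v: "v \<in> ?W" and vmax: "\<And>x. x \<in> ?W \<Longrightarrow> norm (h x) \<le> norm (h v)"
    using continuous_attains_sup[of ?W "\<lambda>x. norm (h x)"] l by auto
  define H where "H = norm (h v)"
  have H: "H \<ge> 0" by (simp add: H_def)
  have "t \<in> ?W" using l by simp
  then have M2: "M2 \<ge> 0" using bk norm_ge_zero order_trans by blast
  have "norm (h v - h t) \<le> (L * H + M2) * (v - t)"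
    using increment_bound_from_derivative_relation[OF dh b bk _ v] vmax unfolding H_def by blast
  also have "\<dots> \<le> (L * H + M2) * l"
    using v b H M2 by (intro mult_left_mono) auto
  finally have "H \<le> norm (h t) + (l * L) * H + l * M2"
    using norm_triangle_ineq2[of "h v" "h t"] unfolding H_def by (simp add: algebra_simps)
  moreover have "(l * L) * H \<le> H / 4" using mult_right_mono[OF L H] by simp
  moreover have "l * M2 \<ge> 0" using l M2 by simp
  ultimately have "H \<le> 2 * norm (h t) + 2 * l * M2" using norm_ge_zero[of "h t"] by linarith
  then show ?thesis using vmax[OF u] unfolding H_def by simp
qed

text \<open>If g' = h + a g on [t, t+l] and h stays within E of h t, then comparing g with its
  linearisation g t + (u - t) h t bounds l |h t| by the size of g.\<close>
lemma linearisation_estimate: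
  fixes g h :: "real \<Rightarrow> complex"
  assumes l: "l > 0" and a: "\<bar>a\<bar> \<le> L"
    and dg: "\<And>x. x \<in> {t..t+l} \<Longrightarrow> (g has_vector_derivative (h x + of_real a * g x)) (at x within {t..t+l})"
    and bg: "\<And>x. x \<in> {t..t+l} \<Longrightarrow> norm (g x) \<le> M0"
    and osc: "\<And>x. x \<in> {t..t+l} \<Longrightarrow> norm (h x - h t) \<le> E"
  shows "l * norm (h t) \<le> 2 * M0 + (E + L * M0) * l"
proof -
  define \<phi> where "\<phi> x = g x - of_real (x - t) * h t" for x
  have "norm (\<phi> (t+l) - \<phi> t) \<le> (E + L * M0) * (t + l - t)"
  proof (rule norm_increment_le[of t "t+l" \<phi> "\<lambda>x. h x - h t + of_real a * g x"])
    fix x assume x: "x \<in> {t..t+l}"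
    show "(\<phi> has_vector_derivative (h x - h t + of_real a * g x)) (at x within {t..t+l})"
      unfolding \<phi>_def by (rule derivative_eq_intros dg[OF x] refl)+ simp
    have "norm (h x - h t + of_real a * g x) \<le> norm (h x - h t) + \<bar>a\<bar> * norm (g x)"
      by (metis norm_mult norm_of_real norm_triangle_ineq)
    also have "\<dots> \<le> E + L * M0"
      using osc[OF x] bg[OF x] a by (intro add_mono mult_mono) auto
    finally show "norm (h x - h t + of_real a * g x) \<le> E + L * M0" .
  qed (use l in auto)
  then have remainder: "norm (g (t+l) - g t - of_real l * h t) \<le> (E + L * M0) * l"
    by (simp add: \<phi>_def algebra_simps)
  have "l * norm (h t) = norm ((g (t+l) - g t) - (g (t+l) - g t - of_real l * h t))"
    using l by (simp add: norm_mult)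
  also have "\<dots> \<le> norm (g (t+l)) + norm (g t) + norm (g (t+l) - g t - of_real l * h t)"
    by (smt (verit, best) norm_triangle_ineq4)
  also have "\<dots> \<le> 2 * M0 + (E + L * M0) * l"
    using bg[of "t+l"] bg[of t] l remainder by simp
  finally show ?thesis .
qed

lemma interpolation_estimate:
  fixes g h k :: "real \<Rightarrow> complex"
  assumes l: "l > 0" and L: "l * L \<le> 1/4"
    and a: "\<bar>a\<bar> \<le> L" and b: "\<bar>b\<bar> \<le> L"
    and dg: "\<And>x. x \<in> {t..t+l} \<Longrightarrow> (g has_vector_derivative (h x + of_real a * g x)) (at x within {t..t+l})"
    and dh: "\<And>x. x \<in> {t..t+l} \<Longrightarrow> (h has_vector_derivative (k x + of_real b * h x)) (at x within {t..t+l})"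
    and bg: "\<And>x. x \<in> {t..t+l} \<Longrightarrow> norm (g x) \<le> M0"
    and bk: "\<And>x. x \<in> {t..t+l} \<Longrightarrow> norm (k x) \<le> M2"
  shows "norm (h t) \<le> 4 * M0 / l + 2 * L * M0 + 3 * l * M2"
proof -
  let ?H = "2 * norm (h t) + 2 * l * M2"
  have "t \<in> {t..t+l}" using l by simp
  then have M2: "M2 \<ge> 0" using bk norm_ge_zero order_trans by blast
  have h_sup: "norm (h x) \<le> ?H" if "x \<in> {t..t+l}" for x
    by (rule sup_bound_from_derivative_relation[OF l L b dh bk that])
  have "norm (h x - h t) \<le> (L * ?H + M2) * l" if x: "x \<in> {t..t+l}" for x
  proof -
    have "norm (h x - h t) \<le> (L * ?H + M2) * (x - t)"
      by (rule increment_bound_from_derivative_relation[OF dh b bk h_sup x])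
    also have "\<dots> \<le> (L * ?H + M2) * l"
      using x b M2 by (intro mult_left_mono) auto
    finally show ?thesis .
  qed
  from linearisation_estimate[OF l a dg bg this]
  have "l * norm (h t) \<le> 2 * M0 + l * (l * L) * ?H + l * l * M2 + l * L * M0"
    by (simp add: algebra_simps)
  moreover have "l * (l * L) * ?H \<le> l * (?H / 4)"
  proof -
    have "?H \<ge> 0" using l M2 by simp
    then have "(l * L) * ?H \<le> ?H / 4" using mult_right_mono[OF L] by simp
    then show ?thesis using l by (simp add: mult.assoc mult_left_mono)
  qed
  ultimately have "l * norm (h t) \<le> l * (2 * M0 / l + norm (h t) / 2 + 3 / 2 * l * M2 + L * M0)"
    using l by (simp add: algebra_simps)
  then have "norm (h t) \<le> 2 * M0 / l + norm (h t) / 2 + 3 / 2 * l * M2 + L * M0"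
    using l by simp
  then show ?thesis by (simp add: field_simps)
qed

lemma step_length_exists:
  fixes \<rho> L s :: real
  assumes "\<rho> > 0" "L > 0" "s > 0"
  shows "\<exists>l>0. l \<le> \<rho> \<and> l * L \<le> 1/4 \<and> l * s \<le> 1 \<and> 1 / l \<le> 1 / \<rho> + 4 * L + s"
proof (intro exI conjI)
  let ?l = "min \<rho> (min (1 / (4 * L)) (1 / s))"
  show "?l > 0" "?l \<le> \<rho>" using assms by auto
  have "?l * L \<le> 1 / (4 * L) * L" "?l * s \<le> 1 / s * s"
    using assms by (intro mult_right_mono; simp)+
  then show "?l * L \<le> 1/4" "?l * s \<le> 1" using assms by simp_all
  show "1 / ?l \<le> 1 / \<rho> + 4 * L + s" using assms by (auto simp: min_def)
qed

lemma fact_power_Suc: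
  fixes C \<sigma> :: real
  shows "C * fact (Suc k) * \<sigma> ^ Suc k = \<sigma> * real (Suc k) * (C * fact k * \<sigma> ^ k)"
  by (simp add: fact_Suc algebra_simps)

text \<open>Arithmetic core of the parameter choice: with m = 2n+1, L = K (m+1) and a step length
  as in step_length_exists, each term of the interpolation estimate is a multiple of
  F = m sigma M0, i.e. of C (2n+1)! sigma^(2n+1).\<close>
lemma interpolation_bound_arith:
  fixes m \<sigma> \<rho> K M0 l :: real
  assumes m: "m \<ge> 1" and \<sigma>: "\<sigma> > 0" and \<rho>: "\<rho> > 0" and K: "K > 0" and M0: "M0 \<ge> 0"
    and l: "l > 0" and inv_l: "1 / l \<le> 1 / \<rho> + 4 * (K * (m + 1)) + \<sigma> * (m + 1)"
    and l_small: "l * (\<sigma> * (m + 1)) \<le> 1"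
  shows "4 * M0 / l + 2 * (K * (m + 1)) * M0 + 3 * l * (\<sigma> * (m + 1) * (m * \<sigma> * M0))
           \<le> m * \<sigma> * M0 * (4 / (\<rho> * \<sigma>) + 36 * K / \<sigma> + 11)"
proof -
  have mM0: "M0 \<le> m * M0"
    using mult_right_mono[OF m M0] by simp
  then have m1M0: "(m + 1) * M0 \<le> 2 * (m * M0)"
    by (simp add: algebra_simps)
  have "4 * M0 / l \<le> 4 * M0 * (1 / \<rho> + 4 * (K * (m + 1)) + \<sigma> * (m + 1))"
    using mult_left_mono[OF inv_l, of "4 * M0"] M0 by simp
  also have "\<dots> = 4 * M0 / \<rho> + 16 * K * ((m + 1) * M0) + 4 * \<sigma> * ((m + 1) * M0)"
    by (simp add: algebra_simps)
  also have "\<dots> \<le> 4 * (m * M0) / \<rho> + 16 * K * (2 * (m * M0)) + 4 * \<sigma> * (2 * (m * M0))"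
    using mM0 m1M0 \<rho> K \<sigma> by (intro add_mono mult_left_mono divide_right_mono) auto
  finally have first: "4 * M0 / l \<le> m * M0 * (4 / \<rho> + 32 * K + 8 * \<sigma>)"
    by (simp add: algebra_simps)
  have second: "2 * (K * (m + 1)) * M0 \<le> m * M0 * (4 * K)"
    using mult_left_mono[OF m1M0, of "2 * K"] K by (simp add: algebra_simps)
  have third: "3 * l * (\<sigma> * (m + 1) * (m * \<sigma> * M0)) \<le> 3 * (m * \<sigma> * M0)"
    using mult_right_mono[OF l_small, of "3 * (m * \<sigma> * M0)"] m \<sigma> M0
    by (simp add: algebra_simps)
  have "m * \<sigma> * M0 * (4 / (\<rho> * \<sigma>) + 36 * K / \<sigma> + 11)
        = m * M0 * (4 / \<rho> + 32 * K + 8 * \<sigma>) + m * M0 * (4 * K) + 3 * (m * \<sigma> * M0)"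
    using \<sigma> \<rho> by (simp add: field_simps)
  with first second third show ?thesis by linarith
qed

lemma odd_order_interpolation:
  fixes g h k :: "real \<Rightarrow> complex" and n :: nat
  assumes K: "K > 0" and \<sigma>: "\<sigma> > 0" and \<rho>: "\<rho> > 0" and C: "C \<ge> 0"
    and a: "\<bar>a\<bar> \<le> K * real (2 * n + 2)" and b: "\<bar>b\<bar> \<le> K * real (2 * n + 2)"
    and dg: "\<And>u. u \<in> {t..t+\<rho>} \<Longrightarrow> (g has_vector_derivative (h u + of_real a * g u)) (at u within {t..t+\<rho>})"
    and dh: "\<And>u. u \<in> {t..t+\<rho>} \<Longrightarrow> (h has_vector_derivative (k u + of_real b * h u)) (at u within {t..t+\<rho>})"
    and bg: "\<And>u. u \<in> {t..t+\<rho>} \<Longrightarrow> norm (g u) \<le> C * fact (2 * n) * \<sigma> ^ (2 * n)"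
    and bk: "\<And>u. u \<in> {t..t+\<rho>} \<Longrightarrow> norm (k u) \<le> C * fact (2 * n + 2) * \<sigma> ^ (2 * n + 2)"
  shows "norm (h t) \<le> C * (4 / (\<rho> * \<sigma>) + 36 * K / \<sigma> + 11) * fact (2 * n + 1) * \<sigma> ^ (2 * n + 1)"
proof -
  define m where "m = real (2 * n + 1)"
  define M0 where "M0 = C * fact (2 * n) * \<sigma> ^ (2 * n)"
  have m: "m \<ge> 1" and L: "K * (m + 1) > 0" and \<sigma>m: "\<sigma> * (m + 1) > 0"
    using K \<sigma> by (auto simp: m_def)
  obtain l where l: "l > 0" "l \<le> \<rho>" and lL: "l * (K * (m + 1)) \<le> 1/4"
    and l_small: "l * (\<sigma> * (m + 1)) \<le> 1"
    and inv_l: "1 / l \<le> 1 / \<rho> + 4 * (K * (m + 1)) + \<sigma> * (m + 1)"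
    using step_length_exists[OF \<rho> L \<sigma>m] by blast
  have M0: "M0 \<ge> 0" using C \<sigma> by (simp add: M0_def)
  have fact_odd: "C * fact (2 * n + 1) * \<sigma> ^ (2 * n + 1) = m * \<sigma> * M0"
    using fact_power_Suc[of C "2 * n" \<sigma>] by (simp add: M0_def m_def)
  have fact_even: "C * fact (2 * n + 2) * \<sigma> ^ (2 * n + 2) = \<sigma> * (m + 1) * (m * \<sigma> * M0)"
    using fact_power_Suc[of C "2 * n + 1" \<sigma>] unfolding fact_odd by (simp add: m_def)
  have sub: "{t..t+l} \<subseteq> {t..t+\<rho>}" using l by auto
  have "norm (h t) \<le> 4 * M0 / l + 2 * (K * (m + 1)) * M0 + 3 * l * (\<sigma> * (m + 1) * (m * \<sigma> * M0))"
  proof (rule interpolation_estimate[OF l(1) lL, where g = g and k = k and a = a and b = b])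
    show "\<bar>a\<bar> \<le> K * (m + 1)" "\<bar>b\<bar> \<le> K * (m + 1)" using a b by (simp_all add: m_def)
    fix u assume "u \<in> {t..t+l}"
    then have u: "u \<in> {t..t+\<rho>}" using sub by auto
    show "(g has_vector_derivative (h u + of_real a * g u)) (at u within {t..t+l})"
      by (rule has_vector_derivative_within_subset[OF dg[OF u] sub])
    show "(h has_vector_derivative (k u + of_real b * h u)) (at u within {t..t+l})"
      by (rule has_vector_derivative_within_subset[OF dh[OF u] sub])
    show "norm (g u) \<le> M0" using bg[OF u] by (simp add: M0_def)
    show "norm (k u) \<le> \<sigma> * (m + 1) * (m * \<sigma> * M0)" using bk[OF u] unfolding fact_even .
  qed
  also have "\<dots> \<le> m * \<sigma> * M0 * (4 / (\<rho> * \<sigma>) + 36 * K / \<sigma> + 11)"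
    by (rule interpolation_bound_arith[OF m \<sigma> \<rho> K M0 l(1) inv_l l_small])
  also have "\<dots> = C * (4 / (\<rho> * \<sigma>) + 36 * K / \<sigma> + 11) * fact (2 * n + 1) * \<sigma> ^ (2 * n + 1)"
    unfolding fact_odd[symmetric] by (simp only: mult_ac)
  finally show ?thesis .
qed

lemma higher_deriv_on_Suc:
  "higher_deriv_on a b (Suc k) g = higher_deriv_on a b k (higher_deriv_on a b (Suc 0) g)"
  by (induction k) simp_all

lemma smooth_on_interval_deriv:
  assumes "smooth_on_interval a b g"
  shows "smooth_on_interval a b (higher_deriv_on a b (Suc 0) g)"
  using assms unfolding smooth_on_interval_def higher_deriv_on_Suc[symmetric] by blast

lemma higher_deriv_on_diff_derivative:
  assumes g1: "smooth_on_interval a b g1" and g2: "smooth_on_interval a b g2" and t: "t \<in> {a..b}"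
  shows "((\<lambda>s. higher_deriv_on a b k g1 s - c * higher_deriv_on a b k g2 s) has_vector_derivative
      (higher_deriv_on a b (Suc k) g1 t - c * higher_deriv_on a b (Suc k) g2 t)) (at t within {a..b})"
  using g1 g2 t unfolding smooth_on_interval_def by (intro derivative_intros) auto

lemma higher_deriv_on_diff:
  assumes ab: "a < b" and g1: "smooth_on_interval a b g1" and g2: "smooth_on_interval a b g2"
    and t: "t \<in> {a..b}"
  shows "higher_deriv_on a b k (\<lambda>s. g1 s - c * g2 s) t
           = higher_deriv_on a b k g1 t - c * higher_deriv_on a b k g2 t"
  using t
proof (induction k arbitrary: t)
  case 0
  then show ?case by simp
next
  case (Suc k)
  note D = higher_deriv_on_diff_derivative[OF g1 g2 Suc.prems, of k c]
  have "(higher_deriv_on a b k (\<lambda>s. g1 s - c * g2 s) has_vector_derivative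
      (higher_deriv_on a b (Suc k) g1 t - c * higher_deriv_on a b (Suc k) g2 t)) (at t within {a..b})"
    by (rule has_vector_derivative_transform[OF Suc.prems _ D]) (rule Suc.IH)
  then show ?case
    by (simp add: vector_derivative_within_closed_interval[OF ab Suc.prems])
qed

lemma smooth_on_interval_diff:
  assumes ab: "a < b" and g1: "smooth_on_interval a b g1" and g2: "smooth_on_interval a b g2"
  shows "smooth_on_interval a b (\<lambda>s. g1 s - c * g2 s)"
  unfolding smooth_on_interval_def
proof (intro allI ballI)
  fix k t assume t: "t \<in> {a..b}"
  note D = higher_deriv_on_diff_derivative[OF g1 g2 t, of k c]
  have "(higher_deriv_on a b k (\<lambda>s. g1 s - c * g2 s) has_vector_derivative
      (higher_deriv_on a b (Suc k) g1 t - c * higher_deriv_on a b (Suc k) g2 t)) (at t within {a..b})"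
    by (rule has_vector_derivative_transform[OF t _ D]) (rule higher_deriv_on_diff[OF ab g1 g2])
  then show "(higher_deriv_on a b k (\<lambda>s. g1 s - c * g2 s) has_vector_derivative
      higher_deriv_on a b (Suc k) (\<lambda>s. g1 s - c * g2 s) t) (at t within {a..b})"
    by (simp only: higher_deriv_on_diff[OF ab g1 g2 t])
qed

lemma smooth_on_interval_Dop:
  assumes ab: "a < b" and f: "smooth_on_interval a b f"
  shows "smooth_on_interval a b (Dop lam a b n f)"
proof (induction n)
  case 0
  then show ?case using f by simp
next
  case (Suc n)
  have "Dop lam a b (Suc n) f = (\<lambda>t. higher_deriv_on a b (Suc 0) (Dop lam a b n f) t
        - complex_of_real (lam n) * Dop lam a b n f t)" by simp
  then show ?case
    using smooth_on_interval_diff[OF ab smooth_on_interval_deriv[OF Suc.IH] Suc.IH] by simp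
qed

lemma Dop_has_vector_derivative:
  assumes ab: "a < b" and f: "smooth_on_interval a b f" and t: "t \<in> {a..b}"
  shows "(Dop lam a b n f has_vector_derivative
           (Dop lam a b (Suc n) f t + complex_of_real (lam n) * Dop lam a b n f t)) (at t within {a..b})"
  using smooth_on_interval_Dop[OF ab f, of lam n] t unfolding smooth_on_interval_def
  by (metis higher_deriv_on.simps Dop.simps(2) diff_add_cancel)

lemma limsup_linear_growth:
  fixes lam :: "nat \<Rightarrow> real"
  assumes "limsup (\<lambda>n. ereal (\<bar>lam n\<bar> / real n)) \<le> ereal \<beta>" "\<beta> > 0"
  shows "\<exists>K>0. \<forall>n. \<bar>lam n\<bar> \<le> K * real (n + 1)"
proof -
  have "limsup (\<lambda>n. ereal (\<bar>lam n\<bar> / real n)) < ereal (\<beta> + 1)"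
    using assms(1) by (simp add: le_less_trans)
  then have "eventually (\<lambda>n. ereal (\<bar>lam n\<bar> / real n) < ereal (\<beta> + 1)) sequentially"
    by (rule Limsup_lessD)
  then obtain N where N: "\<And>n. n \<ge> N \<Longrightarrow> \<bar>lam n\<bar> / real n < \<beta> + 1"
    unfolding eventually_sequentially by auto
  define K where "K = \<beta> + 1 + (\<Sum>i\<le>N. \<bar>lam i\<bar>)"
  have S: "(\<Sum>i\<le>N. \<bar>lam i\<bar>) \<ge> 0" by (simp add: sum_nonneg)
  have K: "K > 0" using assms(2) S unfolding K_def by linarith
  have "\<bar>lam n\<bar> \<le> K * real (n + 1)" for n
  proof (cases "n \<le> N")
    case True
    then have "\<bar>lam n\<bar> \<le> (\<Sum>i\<le>N. \<bar>lam i\<bar>)" by (intro member_le_sum) auto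
    also have "\<dots> \<le> K" unfolding K_def using assms(2) by simp
    also have "\<dots> \<le> K * real (n + 1)" using K by simp
    finally show ?thesis .
  next
    case False
    then have "\<bar>lam n\<bar> < (\<beta> + 1) * real n" using N[of n] by (simp add: divide_less_eq)
    also have "\<dots> \<le> K * real (n + 1)"
      using S assms(2) unfolding K_def by (intro mult_mono) auto
    finally show ?thesis by simp
  qed
  then show ?thesis using K by blast
qed

lemma Dop_odd_order_bound:
  fixes lam :: "nat \<Rightarrow> real" and f :: "real \<Rightarrow> complex"
  assumes ab: "a < b" and f: "smooth_on_interval a b f"
    and K: "K > 0" and lam: "\<And>n. \<bar>lam n\<bar> \<le> K * real (n + 1)"
    and \<sigma>: "\<sigma> > 0" and C: "C \<ge> 0" and \<rho>: "\<rho> > 0"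
    and even: "\<And>n t. t \<in> {a..b} \<Longrightarrow> norm (Dop lam a b (2 * n) f t) \<le> C * fact (2 * n) * \<sigma> ^ (2 * n)"
    and t: "t \<in> {a..b - \<rho>}"
  shows "norm (Dop lam a b (2 * n + 1) f t)
           \<le> C * (4 / (\<rho> * \<sigma>) + 36 * K / \<sigma> + 11) * fact (2 * n + 1) * \<sigma> ^ (2 * n + 1)"
proof (rule odd_order_interpolation[OF K \<sigma> \<rho> C])
  have "K * real (2 * n + 1) \<le> K * real (2 * n + 2)" using K by simp
  then show "\<bar>lam (2 * n)\<bar> \<le> K * real (2 * n + 2)" using lam[of "2 * n"] by linarith
  show "\<bar>lam (2 * n + 1)\<bar> \<le> K * real (2 * n + 2)" using lam[of "2 * n + 1"] by simp
  fix u assume u: "u \<in> {t..t + \<rho>}"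
  have sub: "{t..t + \<rho>} \<subseteq> {a..b}" using t by auto
  with u have u': "u \<in> {a..b}" by auto
  show "norm (Dop lam a b (2 * n) f u) \<le> C * fact (2 * n) * \<sigma> ^ (2 * n)"
    "norm (Dop lam a b (2 * n + 2) f u) \<le> C * fact (2 * n + 2) * \<sigma> ^ (2 * n + 2)"
    using even[OF u', of n] even[OF u', of "Suc n"] by simp_all
  let ?D = "\<lambda>k. Dop lam a b k f"
  show "(?D (2 * n) has_vector_derivative ?D (2 * n + 1) u + of_real (lam (2 * n)) * ?D (2 * n) u)
          (at u within {t..t + \<rho>})"
    using has_vector_derivative_within_subset[OF Dop_has_vector_derivative[OF ab f u'] sub] by simp
  have "2 * n + 2 = Suc (2 * n + 1)" by simp
  then show "(?D (2 * n + 1) has_vector_derivative ?D (2 * n + 2) u + of_real (lam (2 * n + 1)) * ?D (2 * n + 1) u)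
          (at u within {t..t + \<rho>})"
    by (simp only:) (rule has_vector_derivative_within_subset[OF Dop_has_vector_derivative[OF ab f u'] sub])
qed

theorem mainTheorem9:
  fixes lam :: "nat \<Rightarrow> real" and \<beta> \<gamma> x0 C \<sigma> :: real and f :: "real \<Rightarrow> complex"
  assumes "\<beta> > 0"
    and "limsup (\<lambda>n. ereal (\<bar>lam n\<bar> / real n)) \<le> ereal \<beta>"
    and "\<gamma> > 0"
    and "smooth_on_interval x0 (x0 + \<gamma>) f"
    and "C > 0" and "\<sigma> > 0"
    and "\<And>n t. t \<in> {x0..x0 + \<gamma>} \<Longrightarrow>
           norm (Dop lam x0 (x0 + \<gamma>) (2 * n) f t) \<le> C * fact (2 * n) * \<sigma> ^ (2 * n)"
  shows "\<forall>\<epsilon>>0. \<exists>C2 \<delta>. C2 > 0 \<and> 0 < \<delta> \<and> \<delta> < \<gamma> \<and>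
           (\<forall>n. \<forall>t\<in>{x0..x0 + \<delta>}.
              norm (Dop lam x0 (x0 + \<gamma>) (2 * n + 1) f t)
                \<le> C2 * fact (2 * n + 1) * (\<sigma> + \<epsilon>) ^ (2 * n + 1))"
proof (intro allI impI)
  fix \<epsilon> :: real assume \<epsilon>: "\<epsilon> > 0"
  note \<gamma> = assms(3) and C = assms(5) and \<sigma> = assms(6)
  obtain K where K: "K > 0" and lam: "\<And>n. \<bar>lam n\<bar> \<le> K * real (n + 1)"
    using limsup_linear_growth[OF assms(2) assms(1)] by blast
  define C2 where "C2 = C * (4 / (\<gamma> / 2 * \<sigma>) + 36 * K / \<sigma> + 11)"
  have C2: "C2 > 0" unfolding C2_def using C \<gamma> \<sigma> K by (intro mult_pos_pos add_pos_pos) auto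
  have "norm (Dop lam x0 (x0 + \<gamma>) (2 * n + 1) f t) \<le> C2 * fact (2 * n + 1) * (\<sigma> + \<epsilon>) ^ (2 * n + 1)"
    if t: "t \<in> {x0..x0 + \<gamma>/2}" for n t
  proof -
    have "t \<in> {x0..x0 + \<gamma> - \<gamma>/2}" using t by simp
    then have "norm (Dop lam x0 (x0 + \<gamma>) (2 * n + 1) f t) \<le> C2 * fact (2 * n + 1) * \<sigma> ^ (2 * n + 1)"
      unfolding C2_def using \<gamma> C
      by (intro Dop_odd_order_bound[OF _ assms(4) K lam \<sigma> _ _ assms(7)]) auto
    also have "\<dots> \<le> C2 * fact (2 * n + 1) * (\<sigma> + \<epsilon>) ^ (2 * n + 1)"
      using C2 \<sigma> \<epsilon> by (intro mult_left_mono power_mono) auto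
    finally show ?thesis .
  qed
  then show "\<exists>C2 \<delta>. C2 > 0 \<and> 0 < \<delta> \<and> \<delta> < \<gamma> \<and>
           (\<forall>n. \<forall>t\<in>{x0..x0 + \<delta>}.
              norm (Dop lam x0 (x0 + \<gamma>) (2 * n + 1) f t)
                \<le> C2 * fact (2 * n + 1) * (\<sigma> + \<epsilon>) ^ (2 * n + 1))"
    using C2 \<gamma> by (intro exI[of _ C2] exI[of _ "\<gamma>/2"]) auto
qed

end
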